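(* Let $\Omega\subset\mathbb{R}^3$ be a domain and $\mathbf{x}=\boldsymbol{\chi}(\mathbf{X})$ a smooth, one-to-one, invertible map of $\Omega$ onto $\omega$, with deformation gradient $F_{iI}=\partial x_i/\partial X_I$, Jacobian $\Lambda=\det\mathbf{F}>0$, and polar decomposition $\mathbf{F}=\mathbf{V}\mathbf{R}$ ($\mathbf{R}$ proper orthogonal, $\mathbf{V}$ symmetric positive definite with $\mathbf{V}^2=\mathbf{F}\mathbf{F}^t$). Define the vector field $\mathbf{b}(\mathbf{X})$ with components $b_K=R_{jK}\,\partial R_{jM}/\partial X_M$, i.e. $\mathbf{b}=\mathbf{R}^t\,\mathrm{Div}\,\mathbf{R}^t$, and suppose $\mathrm{Curl}\,\mathbf{b}=\nabla_{\mathbf{X}}\wedge\mathbf{b}=0$ in $\Omega$. Let $\beta$ be a function on $\Omega$ with $\nabla_{\mathbf{X}}\beta=\mathbf{b}$. Let $\kappa_0,\rho_0>0$ be constants. Then the normal acoustic fluid with energy density $$E_0=\kappa_0\big(\partial U_I/\partial X_I\big)^2+\rho_0\,\dot{\mathbf{U}}\cdot\dot{\mathbf{U}}\quad\text{in }\Omega$$ can be mapped to a metafluid with isotropic inertia, with energy density $$E=\lambda\big(V_{ij}\,\partial u_j/\partial x_i\big)^2+\rho\,\dot{\mathbf{u}}\cdot\dot{\mathbf{u}}\quad\text{in }\omega,\qquad \lambda=\Lambda^{-1}e^{-2\beta}\kappa_0,\quad \rho=\Lambda^{-1}e^{-2\beta}\rho_0,$$ in the sense that these energy densities are equivalent ($E\,\mathrm{d}v=E_0\,\mathrm{d}V$)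 under the correspondence of displacements $\mathbf{u}=e^{\beta}\mathbf{R}\mathbf{U}$.
   Context: Repeated indices are summed; upper-case indices refer to undeformed coordinates $\mathbf{X}$, lower-case to deformed coordinates $\mathbf{x}$; $\mathrm{d}v=\Lambda\,\mathrm{d}V$. Quantities in $\omega$ are evaluated at $\mathbf{x}=\boldsymbol{\chi}(\mathbf{X})$, and $\mathrm{Curl}$ is taken with respect to $\mathbf{X}$. *)

theory Defs
  imports "HOL-Analysis.Analysis"
begin

text \<open>Vector fields on R^3 are functions real^3 => real^3; second-order tensor
 fields are real^3 => real^3^3, with A $ i $ j the (i,j) component.
 For a map f, jacobian f (at X) $ i $ j = partial f_i / partial X_j.\<close>

definition defgrad :: "(real^3 \<Rightarrow> real^3) \<Rightarrow> real^3 \<Rightarrow> real^3^3" where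
  "defgrad chi X = jacobian chi (at X)"

definition pderiv3 :: "(real^3 \<Rightarrow> real) \<Rightarrow> real^3 \<Rightarrow> 3 \<Rightarrow> real" where
  "pderiv3 f X M = frechet_derivative f (at X) (axis M 1)"

definition div_transp :: "(real^3 \<Rightarrow> real^3^3) \<Rightarrow> real^3 \<Rightarrow> real^3" where
  "div_transp R X = (\<chi> j. \<Sum>M\<in>UNIV. pderiv3 (\<lambda>Y. R Y $ j $ M) X M)"

definition bfield :: "(real^3 \<Rightarrow> real^3^3) \<Rightarrow> real^3 \<Rightarrow> real^3" where
  "bfield R X = transpose (R X) *v div_transp R X"

definition curl3 :: "(real^3 \<Rightarrow> real^3) \<Rightarrow> real^3 \<Rightarrow> real^3" where
  "curl3 b X = (let J = jacobian b (at X) in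
      vector [J $ 3 $ 2 - J $ 2 $ 3, J $ 1 $ 3 - J $ 3 $ 1, J $ 2 $ 1 - J $ 1 $ 2])"

definition E0_density :: "real \<Rightarrow> real \<Rightarrow> (real^3 \<Rightarrow> real \<Rightarrow> real^3) \<Rightarrow> real^3 \<Rightarrow> real \<Rightarrow> real" where
  "E0_density kappa0 rho0 U X t =
     kappa0 * (\<Sum>I\<in>UNIV. jacobian (\<lambda>Y. U Y t) (at X) $ I $ I)\<^sup>2
     + rho0 * (vector_derivative (\<lambda>s. U X s) (at t) \<bullet> vector_derivative (\<lambda>s. U X s) (at t))"

definition E_density :: "real \<Rightarrow> real \<Rightarrow> real^3^3 \<Rightarrow> (real^3 \<Rightarrow> real \<Rightarrow> real^3) \<Rightarrow> real^3 \<Rightarrow> real \<Rightarrow> real" where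
  "E_density lam rho Vx u x t =
     lam * (\<Sum>i\<in>UNIV. \<Sum>j\<in>UNIV. Vx $ i $ j * jacobian (\<lambda>y. u y t) (at x) $ j $ i)\<^sup>2
     + rho * (vector_derivative (\<lambda>s. u x s) (at t) \<bullet> vector_derivative (\<lambda>s. u x s) (at t))"

end

theory Submission
  imports Defs
begin

text \<open>Put h = e^beta R U, so that u o chi = h and, with F = V R, (grad u) V R = grad h. Hence the
  strain term V_ij du_j/dx_i = tr (V grad u) = tr (R^t grad h), and by the product rule
  tr (R^t grad h) = e^beta (b . U + sum_K (R^t (d_K R) U)_K + Div U). Differentiating R^t R = I shows
  that R^t d_K R is skew, which turns the middle term into -b . U, so the strain term is e^beta Div U.
  The velocity e^beta R Udot has length e^beta |Udot| because R is orthogonal, and the factor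
  Lambda^-1 e^(-2 beta) in lambda and rho cancels both e^(2 beta) and the volume change dv = Lambda dV.\<close>

lemma bounded_linear_axis: "bounded_linear (axis i :: 'a::real_normed_vector \<Rightarrow> 'a^'n)"
proof (rule bounded_linear_intro[where K = 1])
  fix x y :: 'a and r :: real
  show "axis i (x + y) = (axis i x + axis i y :: 'a^'n)" "axis i (r *\<^sub>R x) = (r *\<^sub>R axis i x :: 'a^'n)"
    by (simp_all add: axis_def vec_eq_iff)
  have "norm (axis i x :: 'a^'n) \<le> (\<Sum>j\<in>UNIV. norm (axis i x $ j :: 'a))"
    unfolding norm_vec_def by (rule L2_set_le_sum) simp
  also have "\<dots> = norm x"
    by (simp add: axis_def if_distrib cong: if_cong)
  finally show "norm (axis i x :: 'a^'n) \<le> norm x * 1" by simp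
qed

lemma has_derivative_vec_lambda:
  fixes f :: "'a::real_normed_vector \<Rightarrow> 'b::real_normed_vector^'n"
  assumes "\<And>i. ((\<lambda>x. f x $ i) has_derivative (\<lambda>h. f' h $ i)) F"
  shows "(f has_derivative f') F"
proof -
  have "((\<lambda>x. \<Sum>i\<in>UNIV. axis i (f x $ i)) has_derivative (\<lambda>h. \<Sum>i\<in>UNIV. axis i (f' h $ i))) F"
    by (intro has_derivative_sum bounded_linear.has_derivative[OF bounded_linear_axis] assms)
  moreover have "\<And>v :: 'b^'n. (\<Sum>i\<in>UNIV. axis i (v $ i)) = v"
    by (simp add: axis_def vec_eq_iff sum_component if_distrib cong: if_cong)
  ultimately show ?thesis by simp
qed

lemma has_derivative_vec_nth:
  "(f has_derivative f') F \<Longrightarrow> ((\<lambda>x. f x $ i) has_derivative (\<lambda>x. f' x $ i)) F"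
  by (rule bounded_linear.has_derivative[OF bounded_linear_vec_nth])

lemma has_derivative_matrix_vector_mult:
  fixes A :: "'a::real_normed_vector \<Rightarrow> real^'m^'n" and w :: "'a \<Rightarrow> real^'m"
  assumes "(A has_derivative DA) (at x within S)" "(w has_derivative Dw) (at x within S)"
  shows "((\<lambda>y. A y *v w y) has_derivative (\<lambda>h. DA h *v w x + A x *v Dw h)) (at x within S)"
proof (rule has_derivative_vec_lambda)
  fix i
  have "((\<lambda>y. \<Sum>j\<in>UNIV. A y $ i $ j * w y $ j) has_derivative
          (\<lambda>h. \<Sum>j\<in>UNIV. A x $ i $ j * Dw h $ j + DA h $ i $ j * w x $ j)) (at x within S)"
    by (intro has_derivative_sum has_derivative_mult has_derivative_vec_nth assms)
  then show "((\<lambda>y. (A y *v w y) $ i) has_derivative (\<lambda>h. (DA h *v w x + A x *v Dw h) $ i)) (at x within S)"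
    by (simp add: matrix_vector_mult_def sum.distrib algebra_simps)
qed

lemma has_derivative_transpose_mult:
  fixes Q :: "'a::real_normed_vector \<Rightarrow> real^'m^'n"
  assumes "(Q has_derivative DQ) (at x within S)"
  shows "((\<lambda>y. transpose (Q y) ** Q y) has_derivative
           (\<lambda>h. transpose (DQ h) ** Q x + transpose (Q x) ** DQ h)) (at x within S)"
proof (intro has_derivative_vec_lambda)
  fix i j
  have "((\<lambda>y. \<Sum>k\<in>UNIV. Q y $ k $ i * Q y $ k $ j) has_derivative
          (\<lambda>h. \<Sum>k\<in>UNIV. Q x $ k $ i * DQ h $ k $ j + DQ h $ k $ i * Q x $ k $ j)) (at x within S)"
    by (intro has_derivative_sum has_derivative_mult has_derivative_vec_nth assms)
  then show "((\<lambda>y. (transpose (Q y) ** Q y) $ i $ j) has_derivative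
           (\<lambda>h. (transpose (DQ h) ** Q x + transpose (Q x) ** DQ h) $ i $ j)) (at x within S)"
    by (simp add: matrix_matrix_mult_def transpose_def sum.distrib algebra_simps)
qed

lemma orthogonal_matrix_derivative_skew:
  fixes Q :: "'a::real_normed_vector \<Rightarrow> real^'n^'n"
  assumes "open S" "x \<in> S" "\<forall>y\<in>S. orthogonal_matrix (Q y)" "(Q has_derivative DQ) (at x)"
  shows "transpose (DQ h) ** Q x + transpose (Q x) ** DQ h = 0"
proof -
  have "((\<lambda>y. transpose (Q y) ** Q y) has_derivative (\<lambda>h. 0)) (at x)"
  proof (rule has_derivative_transform_within_open[OF has_derivative_const assms(1,2)])
    show "y \<in> S \<Longrightarrow> mat 1 = transpose (Q y) ** Q y" for y
      using assms(3) by (simp add: orthogonal_matrix_def)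
  qed
  with has_derivative_transpose_mult[OF assms(4)]
  have "(\<lambda>h. transpose (DQ h) ** Q x + transpose (Q x) ** DQ h) = (\<lambda>h. 0)"
    by (rule has_derivative_unique)
  then show ?thesis by (rule fun_cong)
qed

(* For the derivative DR of a matrix field R this is Div R^t, i.e. (sum_M d R_jM / d X_M)_j. *)
definition row_div :: "(real^'n \<Rightarrow> real^'n^'m) \<Rightarrow> real^'m" where
  "row_div DA = (\<chi> j. \<Sum>M\<in>UNIV. DA (axis M 1) $ j $ M)"

lemma sum_diagonal_transpose_mult_skew:
  fixes Q :: "real^'n^'n" and DQ :: "real^'n \<Rightarrow> real^'n^'n"
  assumes "\<And>h. transpose (DQ h) ** Q + transpose Q ** DQ h = 0"
  shows "(\<Sum>K\<in>UNIV. ((transpose Q ** DQ (axis K 1)) *v w) $ K) = - ((transpose Q *v row_div DQ) \<bullet> w)"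
proof -
  define D where "D K = DQ (axis K 1)" for K
  have skew: "(transpose Q ** D K) $ K $ M = - (\<Sum>j\<in>UNIV. D K $ j $ K * Q $ j $ M)" for K M
  proof -
    have "(transpose (D K) ** Q + transpose Q ** D K) $ K $ M = 0"
      using assms by (simp add: D_def)
    then show ?thesis
      by (simp add: matrix_matrix_mult_def transpose_def eq_neg_iff_add_eq_0 add.commute)
  qed
  have "(\<Sum>K\<in>UNIV. ((transpose Q ** D K) *v w) $ K)
      = (\<Sum>K\<in>UNIV. \<Sum>M\<in>UNIV. - (\<Sum>j\<in>UNIV. D K $ j $ K * Q $ j $ M) * w $ M)"
    by (simp add: matrix_vector_mult_def skew)
  also have "\<dots> = - (\<Sum>K\<in>UNIV. \<Sum>M\<in>UNIV. \<Sum>j\<in>UNIV. D K $ j $ K * Q $ j $ M * w $ M)"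
    by (simp add: sum_negf sum_distrib_right)
  also have "\<dots> = - (\<Sum>M\<in>UNIV. \<Sum>K\<in>UNIV. \<Sum>j\<in>UNIV. D K $ j $ K * Q $ j $ M * w $ M)"
    by (subst sum.swap) (rule refl)
  also have "\<dots> = - (\<Sum>M\<in>UNIV. \<Sum>j\<in>UNIV. \<Sum>K\<in>UNIV. D K $ j $ K * Q $ j $ M * w $ M)"
    by (rule arg_cong[where f = uminus], rule sum.cong[OF refl], rule sum.swap)
  also have "\<dots> = - ((transpose Q *v row_div DQ) \<bullet> w)"
    by (simp add: D_def row_div_def inner_vec_def matrix_vector_mult_def transpose_def
        sum_distrib_left sum_distrib_right mult_ac)
  finally show ?thesis by (simp add: D_def)
qed

lemma trace_mult_matrix:
  fixes A :: "real^'n^'n" and f :: "real^'n \<Rightarrow> real^'n"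
  shows "trace (A ** matrix f) = (\<Sum>K\<in>UNIV. (A *v f (axis K 1)) $ K)"
  by (simp add: trace_def matrix_matrix_mult_def matrix_vector_mult_def matrix_def)

lemma trace_mult_polar:
  fixes A B V R :: "real^'n^'n"
  assumes "orthogonal_matrix R" "A ** (V ** R) = B"
  shows "trace (V ** A) = trace (transpose R ** B)"
proof -
  have "B ** transpose R = A ** (V ** (R ** transpose R))"
    using assms(2) by (simp add: matrix_mul_assoc)
  also have "\<dots> = A ** V"
    using assms(1) by (simp add: orthogonal_matrix_def)
  finally have "B ** transpose R = A ** V" .
  then show ?thesis by (metis trace_mul_sym)
qed

lemma bfield_eq_row_div:
  assumes "(R has_derivative DR) (at X)"
  shows "bfield R X = transpose (R X) *v row_div DR"
proof -
  have "pderiv3 (\<lambda>Y. R Y $ j $ M) X M = DR (axis M 1) $ j $ M" for j M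
    unfolding pderiv3_def
    using frechet_derivative_at[OF has_derivative_vec_nth[OF has_derivative_vec_nth[OF assms]]]
    by metis
  then show ?thesis by (simp add: bfield_def div_transp_def row_div_def)
qed

lemma jacobian_at:
  "(f has_derivative f') (at x) \<Longrightarrow> jacobian f (at x) = matrix f'"
  unfolding jacobian_def by (metis frechet_derivative_at)

lemma jacobian_comp_inv_into:
  fixes chi :: "real^'n \<Rightarrow> real^'n" and f h :: "real^'n \<Rightarrow> real^'m"
  assumes S: "open S" "open (chi ` S)" "X \<in> S" "inj_on chi S"
    and chi: "chi differentiable (at X)" and inv: "inv_into S chi differentiable (at (chi X))"
    and h: "h differentiable (at X)" and fh: "\<forall>Y\<in>S. f (chi Y) = h Y"
  shows "jacobian f (at (chi X)) ** jacobian chi (at X) = jacobian h (at X)"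
proof -
  define g where "g = inv_into S chi"
  have g_chi: "g (chi X) = X" using inv_into_f_f[OF S(4,3)] by (simp add: g_def)
  have chi_g: "chi (g y) = y" and g_in: "g y \<in> S" if "y \<in> chi ` S" for y
    using that by (simp_all add: g_def f_inv_into_f inv_into_into)
  obtain Dc Dg Dh where Dc: "(chi has_derivative Dc) (at X)"
    and Dg: "(g has_derivative Dg) (at (chi X))" and Dh: "(h has_derivative Dh) (at X)"
    using chi inv h unfolding g_def differentiable_def by blast
  have "((\<lambda>y. chi (g y)) has_derivative Dc \<circ> Dg) (at (chi X))"
    using has_derivative_compose[OF Dg] Dc g_chi by (simp add: comp_def)
  moreover have "((\<lambda>y. chi (g y)) has_derivative id) (at (chi X))"
    using S(2,3) chi_g by (intro has_derivative_transform_within_open[OF has_derivative_id]) auto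
  ultimately have "Dc \<circ> Dg = id" by (rule has_derivative_unique)
  then have "matrix Dc ** matrix Dg = mat 1"
    using matrix_compose[OF has_derivative_linear[OF Dg] has_derivative_linear[OF Dc]]
    by (simp add: matrix_id_mat_1)
  then have inverse: "matrix Dg ** matrix Dc = mat 1"
    by (simp add: matrix_left_right_inverse)
  have "((\<lambda>y. h (g y)) has_derivative Dh \<circ> Dg) (at (chi X))"
    using has_derivative_compose[OF Dg] Dh g_chi by (simp add: comp_def)
  then have "(f has_derivative Dh \<circ> Dg) (at (chi X))"
  proof (rule has_derivative_transform_within_open[OF _ S(2)])
    show "chi X \<in> chi ` S" using S(3) by blast
    show "h (g y) = f y" if "y \<in> chi ` S" for y
      using fh g_in[OF that] chi_g[OF that] by metis
  qed
  then have "jacobian f (at (chi X)) = matrix Dh ** matrix Dg"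
    using Dg Dh by (simp add: jacobian_at matrix_compose has_derivative_linear)
  then show ?thesis
    using inverse Dc Dh by (simp add: jacobian_at flip: matrix_mul_assoc)
qed

lemma inner_vector_derivative_orthogonal_scaled:
  fixes Q :: "real^'n^'n" and f :: "real \<Rightarrow> real^'n"
  assumes "orthogonal_matrix Q" "f differentiable (at t)"
  shows "vector_derivative (\<lambda>s. c *\<^sub>R (Q *v f s)) (at t) \<bullet> vector_derivative (\<lambda>s. c *\<^sub>R (Q *v f s)) (at t)
       = c\<^sup>2 * (vector_derivative f (at t) \<bullet> vector_derivative f (at t))"
proof -
  have "bounded_linear (\<lambda>v. c *\<^sub>R (Q *v v))"
    by (intro bounded_linear_compose[OF bounded_linear_scaleR_right] matrix_vector_mul_bounded_linear)
  from bounded_linear.has_vector_derivative[OF this vector_derivative_works[THEN iffD1, OF assms(2)]]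
  have "vector_derivative (\<lambda>s. c *\<^sub>R (Q *v f s)) (at t) = c *\<^sub>R (Q *v vector_derivative f (at t))"
    by (rule vector_derivative_at)
  moreover have "orthogonal_transformation ((*v) Q)"
    using assms(1) by (simp add: orthogonal_transformation_matrix)
  ultimately show ?thesis
    by (simp add: orthogonal_transformation_def power2_eq_square)
qed

lemma trace_transpose_jacobian_exp_rotation:
  fixes R :: "real^'n \<Rightarrow> real^'n^'n" and \<beta> :: "real^'n \<Rightarrow> real" and W :: "real^'n \<Rightarrow> real^'n"
  assumes S: "open S" "X \<in> S" "\<forall>Y\<in>S. orthogonal_matrix (R Y)"
    and R: "(R has_derivative DR) (at X)"
    and \<beta>: "(\<beta> has_derivative (\<lambda>h. (transpose (R X) *v row_div DR) \<bullet> h)) (at X)"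
    and W: "(W has_derivative DW) (at X)"
  shows "trace (transpose (R X) ** jacobian (\<lambda>Y. exp (\<beta> Y) *\<^sub>R (R Y *v W Y)) (at X))
         = exp (\<beta> X) * trace (jacobian W (at X))"
proof -
  define b where "b = transpose (R X) *v row_div DR"
  define Dh where "Dh = (\<lambda>v. exp (\<beta> X) *\<^sub>R ((b \<bullet> v) *\<^sub>R (R X *v W X) + DR v *v W X + R X *v DW v))"
  have \<beta>_b: "(\<beta> has_derivative (\<lambda>h. b \<bullet> h)) (at X)"
    using \<beta> by (simp add: b_def)
  have "((\<lambda>Y. exp (\<beta> Y) *\<^sub>R (R Y *v W Y)) has_derivative Dh) (at X)"
    using has_derivative_scaleR[OF has_derivative_exp[OF \<beta>_b] has_derivative_matrix_vector_mult[OF R W]]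
    by (simp add: Dh_def algebra_simps)
  then have "trace (transpose (R X) ** jacobian (\<lambda>Y. exp (\<beta> Y) *\<^sub>R (R Y *v W Y)) (at X))
      = (\<Sum>K\<in>UNIV. (transpose (R X) *v Dh (axis K 1)) $ K)"
    by (simp add: jacobian_at trace_mult_matrix)
  also have "\<dots> = exp (\<beta> X) * (b \<bullet> W X + (\<Sum>K\<in>UNIV. ((transpose (R X) ** DR (axis K 1)) *v W X) $ K)
                                  + (\<Sum>K\<in>UNIV. DW (axis K 1) $ K))"
  proof -
    have "transpose (R X) *v Dh (axis K 1)
        = exp (\<beta> X) *\<^sub>R ((b $ K) *\<^sub>R W X + (transpose (R X) ** DR (axis K 1)) *v W X + DW (axis K 1))" for K
      using S(2,3) by (simp add: Dh_def algebra_simps matrix_vector_mul_assoc orthogonal_matrix_def inner_axis)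
    then show ?thesis
      by (simp add: inner_vec_def sum.distrib sum_distrib_left algebra_simps)
  qed
  also have "\<dots> = exp (\<beta> X) * trace (jacobian W (at X))"
    using sum_diagonal_transpose_mult_skew[of DR "R X" "W X"]
      orthogonal_matrix_derivative_skew[OF S R] W
    by (simp add: b_def jacobian_at trace_mult_matrix[of "mat 1", simplified])
  finally show ?thesis .
qed

lemma trace_jacobian_transported_exp_rotation:
  fixes chi :: "real^'n \<Rightarrow> real^'n" and R :: "real^'n \<Rightarrow> real^'n^'n" and V :: "real^'n^'n"
    and \<beta> :: "real^'n \<Rightarrow> real" and W u :: "real^'n \<Rightarrow> real^'n"
  assumes S: "open S" "open (chi ` S)" "X \<in> S" "inj_on chi S"
    and chi: "chi differentiable (at X)" "inv_into S chi differentiable (at (chi X))"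
    and polar: "jacobian chi (at X) = V ** R X" "\<forall>Y\<in>S. orthogonal_matrix (R Y)"
    and R: "(R has_derivative DR) (at X)"
    and \<beta>: "(\<beta> has_derivative (\<lambda>h. (transpose (R X) *v row_div DR) \<bullet> h)) (at X)"
    and W: "(W has_derivative DW) (at X)"
    and u: "\<forall>Y\<in>S. u (chi Y) = exp (\<beta> Y) *\<^sub>R (R Y *v W Y)"
  shows "trace (V ** jacobian u (at (chi X))) = exp (\<beta> X) * trace (jacobian W (at X))"
proof -
  have "(\<lambda>Y. exp (\<beta> Y) *\<^sub>R (R Y *v W Y)) differentiable (at X)"
    unfolding differentiable_def
    using has_derivative_scaleR[OF has_derivative_exp[OF \<beta>] has_derivative_matrix_vector_mult[OF R W]]
    by blast
  then have "jacobian u (at (chi X)) ** (V ** R X) = jacobian (\<lambda>Y. exp (\<beta> Y) *\<^sub>R (R Y *v W Y)) (at X)"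
    using jacobian_comp_inv_into[OF S chi _ u] polar(1) by simp
  then have "trace (V ** jacobian u (at (chi X)))
      = trace (transpose (R X) ** jacobian (\<lambda>Y. exp (\<beta> Y) *\<^sub>R (R Y *v W Y)) (at X))"
    using trace_mult_polar polar(2) S(3) by blast
  also have "\<dots> = exp (\<beta> X) * trace (jacobian W (at X))"
    by (rule trace_transpose_jacobian_exp_rotation[OF S(1,3) polar(2) R \<beta> W])
  finally show ?thesis .
qed

theorem lemma2:
  fixes \<Omega> :: "(real^3) set"
    and chi :: "real^3 \<Rightarrow> real^3"
    and R V :: "real^3 \<Rightarrow> real^3^3"
    and \<beta> :: "real^3 \<Rightarrow> real"
    and U u :: "real^3 \<Rightarrow> real \<Rightarrow> real^3"
    and \<kappa>0 \<rho>0 :: real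
  assumes domain: "open \<Omega>" "connected \<Omega>"
    and chi_diff: "chi differentiable_on \<Omega>"
    and chi_inj: "inj_on chi \<Omega>"
    and omega_open: "open (chi ` \<Omega>)"
    and chi_inv_diff: "inv_into \<Omega> chi differentiable_on (chi ` \<Omega>)"
    and jac_pos: "\<forall>X\<in>\<Omega>. det (defgrad chi X) > 0"
    and polar: "\<forall>X\<in>\<Omega>. orthogonal_matrix (R X) \<and> det (R X) = 1
                   \<and> transpose (V X) = V X \<and> (\<forall>v. v \<noteq> 0 \<longrightarrow> v \<bullet> (V X *v v) > 0)
                   \<and> defgrad chi X = V X ** R X"
    and R_diff: "\<forall>X\<in>\<Omega>. R differentiable (at X)"
    and curl_b: "\<forall>X\<in>\<Omega>. curl3 (bfield R) X = 0"
    and grad_beta: "\<forall>X\<in>\<Omega>. (\<beta> has_derivative (\<lambda>h. bfield R X \<bullet> h)) (at X)"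
    and pos_consts: "\<kappa>0 > 0" "\<rho>0 > 0"
    and U_diff: "\<forall>X\<in>\<Omega>. \<forall>t. (\<lambda>Y. U Y t) differentiable (at X) \<and> (\<lambda>s. U X s) differentiable (at t)"
    and corresp: "\<forall>X\<in>\<Omega>. \<forall>t. u (chi X) t = exp (\<beta> X) *\<^sub>R (R X *v U X t)"
  shows "\<forall>X\<in>\<Omega>. \<forall>t.
           E_density (inverse (det (defgrad chi X)) * exp (-2 * \<beta> X) * \<kappa>0)
                     (inverse (det (defgrad chi X)) * exp (-2 * \<beta> X) * \<rho>0)
                     (V X) u (chi X) t * det (defgrad chi X)
           = E0_density \<kappa>0 \<rho>0 U X t"
  (* Curl b = 0 only guarantees that beta exists, which is assumed here. *)
proof (intro ballI allI)
  fix X t assume X: "X \<in> \<Omega>"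
  have orth: "orthogonal_matrix (R X)" and F: "defgrad chi X = V X ** R X"
    using polar X by blast+
  have R: "(R has_derivative frechet_derivative R (at X)) (at X)"
    using R_diff X frechet_derivative_works by blast
  have "trace (V X ** jacobian (\<lambda>y. u y t) (at (chi X))) = exp (\<beta> X) * trace (jacobian (\<lambda>Y. U Y t) (at X))"
  proof (rule trace_jacobian_transported_exp_rotation[OF domain(1) omega_open X chi_inj _ _ _ _ R])
    show "chi differentiable (at X)" "inv_into \<Omega> chi differentiable (at (chi X))"
      using chi_diff chi_inv_diff X domain(1) omega_open by (auto simp: differentiable_on_eq_differentiable_at)
    show "jacobian chi (at X) = V X ** R X" "\<forall>Y\<in>\<Omega>. orthogonal_matrix (R Y)"
      using F polar by (auto simp: defgrad_def)
    show "(\<beta> has_derivative (\<lambda>h. (transpose (R X) *v row_div (frechet_derivative R (at X))) \<bullet> h)) (at X)"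
      using grad_beta X bfield_eq_row_div[OF R] by metis
    show "((\<lambda>Y. U Y t) has_derivative frechet_derivative (\<lambda>Y. U Y t) (at X)) (at X)"
      using U_diff X frechet_derivative_works by blast
  qed (use corresp in simp)
  then have strain: "(\<Sum>i\<in>UNIV. \<Sum>j\<in>UNIV. V X $ i $ j * jacobian (\<lambda>y. u y t) (at (chi X)) $ j $ i)
      = exp (\<beta> X) * trace (jacobian (\<lambda>Y. U Y t) (at X))"
    by (simp add: trace_def matrix_matrix_mult_def)
  have "(\<lambda>s. u (chi X) s) = (\<lambda>s. exp (\<beta> X) *\<^sub>R (R X *v U X s))"
    using corresp X by auto
  then have kinetic: "vector_derivative (\<lambda>s. u (chi X) s) (at t) \<bullet> vector_derivative (\<lambda>s. u (chi X) s) (at t)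
      = (exp (\<beta> X))\<^sup>2 * (vector_derivative (\<lambda>s. U X s) (at t) \<bullet> vector_derivative (\<lambda>s. U X s) (at t))"
    using inner_vector_derivative_orthogonal_scaled[OF orth] U_diff X by simp
  have exp_scale: "exp (-2 * \<beta> X) = inverse ((exp (\<beta> X))\<^sup>2)"
    by (simp add: power2_eq_square exp_minus flip: exp_add)
  have "det (defgrad chi X) > 0"
    using jac_pos X by blast
  then show "E_density (inverse (det (defgrad chi X)) * exp (-2 * \<beta> X) * \<kappa>0)
                     (inverse (det (defgrad chi X)) * exp (-2 * \<beta> X) * \<rho>0)
                     (V X) u (chi X) t * det (defgrad chi X)
           = E0_density \<kappa>0 \<rho>0 U X t"
    unfolding E_density_def E0_density_def strain kinetic exp_scale trace_def[symmetric]
    by (simp add: field_simps power_mult_distrib)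
qed

end
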